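(* Let $\mathfrak g$ be a finite-dimensional Lie algebra over $\mathbb F$, $G$ a connected Lie group with Lie algebra $\mathfrak g$, $R$ an endomorphism of $\mathfrak g$ (not necessarily an $R$-matrix), $c\in\mathbb F$, and assume that $\mathcal R(x,y)=(R(x-y)+cy,\,R(x-y)+cx)$ is an $R$-matrix of $\mathfrak g\times\mathfrak g$. For $\lambda\in\mathbb F$ let $\psi_\lambda:\mathfrak g^*\times\mathfrak g^*\to\mathfrak g^*$, $\psi_\lambda(\xi,\eta)=\lambda\xi-\eta$. Then: (1) for every $\mathrm{Ad}^*$-invariant function $F$ on $\mathfrak g^*$, $F\circ\psi_1$ is a Casimir function of $\{\cdot,\cdot\}_{\mathcal R}$; (2) for all $\mathrm{Ad}^*$-invariant functions $F,H$ on $\mathfrak g^*$ and all $\lambda,\gamma\in\mathbb F$, $\{F\circ\psi_\lambda,H\circ\psi_\gamma\}_{\mathcal R}=0$; in particular, if $F,H$ are $\mathrm{Ad}^*$-invariant polynomials of degrees $l$ and $k$ and the functions $F_0,\dots,F_l,H_0,\dots,H_k$ on $\mathfrak g^*\times\mathfrak g^*$ are defined by $F(\lambda\xi-\eta)=\sum_{i=0}^l\lambda^iF_i(\xi,\eta)$ and $H(\gamma\xi-\eta)=\sum_{j=0}^k\gamma^jH_j(\xi,\eta)$ for all $\lambda,\gamma$, then all the $F_i,H_j$ pairwise Poisson commute for $\{\cdot,\cdot\}_{\mathcal R}$; (3) if $c=1$, then $\psi_1:(\mathfrak g^*\times\mathfrak g^*,\{\cdot,\cdot\}_{\mathcal R})\to(\mathfrak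 g^*,\{\cdot,\cdot\})$ is a Poisson map, where $\{F,H\}(\xi)=\langle\xi,[d_\xi F,d_\xi H]\rangle$ is the Lie–Poisson bracket of $\mathfrak g^*$.
   Context: $\mathfrak g\times\mathfrak g$ carries the componentwise bracket. An endomorphism $S$ of a Lie algebra is an $R$-matrix if $[x,y]_S=\tfrac12([Sx,y]+[x,Sy])$ is a Lie bracket. $\mathfrak g^*\times\mathfrak g^*$ is identified with $(\mathfrak g\times\mathfrak g)^*$ via the pairing $\langle(\xi,\eta),(x,y)\rangle=\langle\xi,x\rangle-\langle\eta,y\rangle$; accordingly the differential $d_{(\xi,\eta)}F$ of a function on $\mathfrak g^*\times\mathfrak g^*$ is an element of $\mathfrak g\times\mathfrak g$ (via this pairing), and $d_\xi F\in\mathfrak g$ for functions on $\mathfrak g^*$. The Poisson $\mathcal R$-bracket on $\mathfrak g^*\times\mathfrak g^*$ is $\{F,H\}_{\mathcal R}(\xi,\eta)=\tfrac12\langle(\xi,\eta),[\mathcal R\,d_{(\xi,\eta)}F,d_{(\xi,\eta)}H]+[d_{(\xi,\eta)}F,\mathcal R\,d_{(\xi,\eta)}H]\rangle$. Functions are smooth ($\mathbb F=\mathbb R$) or holomorphic ($\mathbb F=\mathbb C$). *)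

theory Defs
  imports "HOL-Analysis.Analysis"
begin

text \<open>Model: the ground field is a type 'k of class real_normed_field (a commutative
absolutely valued real algebra, i.e. R or C up to isomorphism). The Lie algebra g is
'k^'n (a fixed basis), g* is identified with 'k^'n via the dual basis, so that the
pairing is the coordinate sum below.\<close>

definition pair :: "'k::real_normed_field ^ 'n \<Rightarrow> 'k ^ 'n \<Rightarrow> 'k" where
  "pair \<xi> x = (\<Sum>i\<in>UNIV. \<xi> $ i * x $ i)"

definition pair2 :: "('k::real_normed_field ^ 'n) \<times> ('k ^ 'n) \<Rightarrow> ('k ^ 'n) \<times> ('k ^ 'n) \<Rightarrow> 'k" where
  "pair2 p q = pair (fst p) (fst q) - pair (snd p) (snd q)"

definition is_lie_bracket :: "('k::field \<Rightarrow> 'v \<Rightarrow> 'v) \<Rightarrow> ('v::ab_group_add \<Rightarrow> 'v \<Rightarrow> 'v) \<Rightarrow> bool" where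
  "is_lie_bracket sc br \<longleftrightarrow>
     (\<forall>a u v w. br (sc a u + v) w = sc a (br u w) + br v w) \<and>
     (\<forall>a u v w. br w (sc a u + v) = sc a (br w u) + br w v) \<and>
     (\<forall>u. br u u = 0) \<and>
     (\<forall>u v w. br u (br v w) + br v (br w u) + br w (br u v) = 0)"

definition is_R_matrix :: "('k::field \<Rightarrow> 'v \<Rightarrow> 'v) \<Rightarrow> ('v::ab_group_add \<Rightarrow> 'v \<Rightarrow> 'v) \<Rightarrow> ('v \<Rightarrow> 'v) \<Rightarrow> bool" where
  "is_R_matrix sc br S \<longleftrightarrow>
     is_lie_bracket sc (\<lambda>x y. sc (inverse 2) (br (S x) y + br x (S y)))"

definition sc2 :: "'k::real_normed_field \<Rightarrow> ('k ^ 'n) \<times> ('k ^ 'n) \<Rightarrow> ('k ^ 'n) \<times> ('k ^ 'n)" where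
  "sc2 a p = (a *s fst p, a *s snd p)"

definition prod_br :: "('k ^ 'n \<Rightarrow> 'k ^ 'n \<Rightarrow> 'k ^ 'n) \<Rightarrow> ('k ^ 'n) \<times> ('k ^ 'n) \<Rightarrow> ('k ^ 'n) \<times> ('k ^ 'n) \<Rightarrow> ('k ^ 'n) \<times> ('k ^ 'n)" where
  "prod_br B p q = (B (fst p) (fst q), B (snd p) (snd q))"

definition Rcal :: "('k::real_normed_field ^ 'n \<Rightarrow> 'k ^ 'n) \<Rightarrow> 'k \<Rightarrow> ('k ^ 'n) \<times> ('k ^ 'n) \<Rightarrow> ('k ^ 'n) \<times> ('k ^ 'n)" where
  "Rcal R c p = (R (fst p - snd p) + c *s snd p, R (fst p - snd p) + c *s fst p)"

text \<open>'k-differentiability: Frechet differentiable with 'k-linear derivative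
(for 'k = C this is holomorphy).\<close>
definition kdifferentiable :: "('k::real_normed_field ^ 'm \<Rightarrow> 'k) \<Rightarrow> 'k ^ 'm \<Rightarrow> bool" where
  "kdifferentiable f x \<longleftrightarrow>
     (\<exists>D. (f has_derivative D) (at x) \<and> (\<forall>c v. D (c *s v) = c * D v))"

definition partial :: "('k::real_normed_field ^ 'm \<Rightarrow> 'k) \<Rightarrow> 'm \<Rightarrow> 'k ^ 'm \<Rightarrow> 'k" where
  "partial f i x = frechet_derivative f (at x) (axis i 1)"

fun Ck :: "nat \<Rightarrow> ('k::real_normed_field ^ 'm \<Rightarrow> 'k) \<Rightarrow> bool" where
  "Ck 0 f = continuous_on UNIV f"
| "Ck (Suc m) f = ((\<forall>x. kdifferentiable f x) \<and> (\<forall>i. Ck m (\<lambda>x. partial f i x)))"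

definition smooth :: "('k::real_normed_field ^ 'm \<Rightarrow> 'k) \<Rightarrow> bool" where
  "smooth f \<longleftrightarrow> (\<forall>m. Ck m f)"

definition smooth2 :: "(('k::real_normed_field ^ 'n) \<times> ('k ^ 'n) \<Rightarrow> 'k) \<Rightarrow> bool" where
  "smooth2 f \<longleftrightarrow> smooth (\<lambda>z::'k ^ ('n + 'n). f (\<chi> i. z $ Inl i, \<chi> i. z $ Inr i))"

definition d1 :: "('k::real_normed_field ^ 'n \<Rightarrow> 'k) \<Rightarrow> 'k ^ 'n \<Rightarrow> 'k ^ 'n" where
  "d1 f \<xi> = (\<chi> i. frechet_derivative f (at \<xi>) (axis i 1))"

text \<open>d_(xi,eta) F in g x g, with pair2 (v,w) (d F) = DF(xi,eta)(v,w).\<close>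
definition d2 :: "(('k::real_normed_field ^ 'n) \<times> ('k ^ 'n) \<Rightarrow> 'k) \<Rightarrow> ('k ^ 'n) \<times> ('k ^ 'n) \<Rightarrow> ('k ^ 'n) \<times> ('k ^ 'n)" where
  "d2 f p = ((\<chi> i. frechet_derivative f (at p) (axis i 1, 0)),
             (\<chi> i. - frechet_derivative f (at p) (0, axis i 1)))"

definition R_bracket :: "('k::real_normed_field ^ 'n \<Rightarrow> 'k ^ 'n \<Rightarrow> 'k ^ 'n) \<Rightarrow>
    (('k ^ 'n) \<times> ('k ^ 'n) \<Rightarrow> ('k ^ 'n) \<times> ('k ^ 'n)) \<Rightarrow>
    (('k ^ 'n) \<times> ('k ^ 'n) \<Rightarrow> 'k) \<Rightarrow> (('k ^ 'n) \<times> ('k ^ 'n) \<Rightarrow> 'k) \<Rightarrow> ('k ^ 'n) \<times> ('k ^ 'n) \<Rightarrow> 'k" where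
  "R_bracket B S F H p =
     inverse 2 * pair2 p (prod_br B (S (d2 F p)) (d2 H p) + prod_br B (d2 F p) (S (d2 H p)))"

definition LP_bracket :: "('k::real_normed_field ^ 'n \<Rightarrow> 'k ^ 'n \<Rightarrow> 'k ^ 'n) \<Rightarrow>
    ('k ^ 'n \<Rightarrow> 'k) \<Rightarrow> ('k ^ 'n \<Rightarrow> 'k) \<Rightarrow> 'k ^ 'n \<Rightarrow> 'k" where
  "LP_bracket B F H \<xi> = pair \<xi> (B (d1 F \<xi>) (d1 H \<xi>))"

definition casimir :: "((('k::real_normed_field ^ 'n) \<times> ('k ^ 'n) \<Rightarrow> 'k) \<Rightarrow> (('k ^ 'n) \<times> ('k ^ 'n) \<Rightarrow> 'k) \<Rightarrow> ('k ^ 'n) \<times> ('k ^ 'n) \<Rightarrow> 'k)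
     \<Rightarrow> (('k ^ 'n) \<times> ('k ^ 'n) \<Rightarrow> 'k) \<Rightarrow> bool" where
  "casimir P C \<longleftrightarrow> (\<forall>H. smooth2 H \<longrightarrow> (\<forall>p. P C H p = 0))"

definition psi :: "'k::real_normed_field \<Rightarrow> ('k ^ 'n) \<times> ('k ^ 'n) \<Rightarrow> 'k ^ 'n" where
  "psi lam p = lam *s fst p - snd p"

text \<open>Ad(exp x) = e^(ad x); for connected G, Ad(G) is generated by these, so
Ad*-invariance means invariance under xi |-> xi o e^(ad x) for all x in g.\<close>
definition expad :: "('k::{real_normed_field,banach} ^ 'n \<Rightarrow> 'k ^ 'n \<Rightarrow> 'k ^ 'n) \<Rightarrow> 'k ^ 'n \<Rightarrow> 'k ^ 'n \<Rightarrow> 'k ^ 'n" where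
  "expad B x v = (\<Sum>m. inverse (fact m) *\<^sub>R ((B x ^^ m) v))"

definition coAd :: "('k::{real_normed_field,banach} ^ 'n \<Rightarrow> 'k ^ 'n \<Rightarrow> 'k ^ 'n) \<Rightarrow> 'k ^ 'n \<Rightarrow> 'k ^ 'n \<Rightarrow> 'k ^ 'n" where
  "coAd B x \<xi> = (\<chi> i. pair \<xi> (expad B x (axis i 1)))"

definition Ad_star_invariant :: "('k::{real_normed_field,banach} ^ 'n \<Rightarrow> 'k ^ 'n \<Rightarrow> 'k ^ 'n) \<Rightarrow> ('k ^ 'n \<Rightarrow> 'k) \<Rightarrow> bool" where
  "Ad_star_invariant B F \<longleftrightarrow> (\<forall>x \<xi>. F (coAd B x \<xi>) = F \<xi>)"

inductive poly_le :: "nat \<Rightarrow> ('k::real_normed_field ^ 'n \<Rightarrow> 'k) \<Rightarrow> bool" where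
  pconst: "poly_le d (\<lambda>_. a)"
| pcoord: "1 \<le> d \<Longrightarrow> poly_le d (\<lambda>\<xi>. \<xi> $ i)"
| padd: "poly_le d f \<Longrightarrow> poly_le d g \<Longrightarrow> poly_le d (\<lambda>\<xi>. f \<xi> + g \<xi>)"
| pmult: "poly_le d f \<Longrightarrow> poly_le e g \<Longrightarrow> poly_le (d + e) (\<lambda>\<xi>. f \<xi> * g \<xi>)"
| pmono: "poly_le d f \<Longrightarrow> d \<le> e \<Longrightarrow> poly_le e f"

definition poly_degree :: "('k::real_normed_field ^ 'n \<Rightarrow> 'k) \<Rightarrow> nat \<Rightarrow> bool" where
  "poly_degree f l \<longleftrightarrow> poly_le l f \<and> (\<forall>d<l. \<not> poly_le d f)"

end

theory Submission
  imports Defs "HOL-Computational_Algebra.Polynomial"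
begin

text \<open>Infinitesimally, \<open>Ad\<^sup>*\<close>-invariance of \<open>F\<close> says \<open>\<langle>\<xi>, [x, d\<^sub>\<xi>F]\<rangle> = 0\<close> for all \<open>x\<close>.
  The differential of \<open>F \<circ> \<psi>\<^sub>\<lambda>\<close> at \<open>(\<xi>, \<eta>)\<close> is \<open>(\<lambda> a, a)\<close> with \<open>a = d\<^sub>\<mu>F\<close>, \<open>\<mu> = \<lambda> \<xi> - \<eta>\<close>,
  so the \<open>\<R>\<close>-bracket of \<open>F \<circ> \<psi>\<^sub>\<lambda>\<close> and \<open>H \<circ> \<psi>\<^sub>\<gamma>\<close> (with \<open>b = d\<^sub>\<nu>H\<close>, \<open>\<nu> = \<gamma> \<xi> - \<eta>\<close>)
  expands into pairings of \<open>\<mu>\<close> with brackets \<open>[a, _]\<close>, of \<open>\<nu>\<close> with brackets \<open>[_, b]\<close>, and of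
  \<open>\<xi>\<close> and \<open>\<eta>\<close> with \<open>[a, b]\<close>. The first two kinds vanish by invariance; subtracting them gives
  \<open>(\<lambda> - \<gamma>) \<langle>\<xi>, [a, b]\<rangle> = 0\<close>, and for \<open>\<lambda> = \<gamma>\<close> one has \<open>[d\<^sub>\<mu>F, d\<^sub>\<mu>H] = 0\<close> by a
  continuity argument.
  The coefficient functions \<open>F\<^sub>i\<close> are linear combinations of the \<open>F \<circ> \<psi>\<^sub>m\<close>, \<open>m = 0, \<dots>, l\<close>
  (invert a Vandermonde matrix), so they Poisson commute by bilinearity of the bracket.
  For \<open>c = 1\<close> the same expansion of \<open>{F \<circ> \<psi>\<^sub>1, H \<circ> \<psi>\<^sub>1}\<^sub>\<R>\<close> collapses to the
  Lie--Poisson bracket at \<open>\<xi> - \<eta>\<close>.\<close>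

lemma pair_add_left: "pair (u + v) w = pair u w + pair v w"
  unfolding pair_def by (simp add: sum.distrib distrib_right)

lemma pair_add_right: "pair w (u + v) = pair w u + pair w v"
  unfolding pair_def by (simp add: sum.distrib distrib_left)

lemma pair_diff_left: "pair (u - v) w = pair u w - pair v w"
  unfolding pair_def by (simp add: sum_subtractf left_diff_distrib)

lemma pair_diff_right: "pair w (u - v) = pair w u - pair w v"
  unfolding pair_def by (simp add: sum_subtractf right_diff_distrib)

lemma pair_neg_left: "pair (- u) w = - pair u w"
  unfolding pair_def by (simp add: sum_negf)

lemma pair_neg_right: "pair w (- u) = - pair w u"
  unfolding pair_def by (simp add: sum_negf)

lemma pair_scale_left: "pair (a *s u) w = a * pair u w"
  unfolding pair_def by (simp add: sum_distrib_left mult.assoc)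

lemma pair_scale_right: "pair w (a *s u) = a * pair w u"
  unfolding pair_def by (simp add: sum_distrib_left mult.left_commute)

lemma pair_zero_left [simp]: "pair 0 w = 0"
  unfolding pair_def by simp

lemma pair_zero_right [simp]: "pair w 0 = 0"
  unfolding pair_def by simp

lemmas pair_simps = pair_add_left pair_add_right pair_diff_left pair_diff_right
  pair_neg_left pair_neg_right pair_scale_left pair_scale_right

lemma pair_sum_right: "pair \<xi> (\<Sum>i\<in>S. g i) = (\<Sum>i\<in>S. pair \<xi> (g i))"
  unfolding pair_def by (simp add: sum_distrib_left sum.swap[of _ S])

lemma pair_axis_right: "pair \<xi> (axis i 1) = \<xi> $ i"
  unfolding pair_def axis_def by (simp add: if_distrib cong: if_cong)

lemma pair_axis_left: "pair (axis i 1) v = v $ i"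
  using pair_axis_right[of v i] unfolding pair_def by (simp add: mult.commute)

lemma vec_eq_0_if_pair_eq_0: "(\<And>\<zeta>. pair \<zeta> v = 0) \<Longrightarrow> v = 0"
  by (metis pair_axis_left vec_eq_iff zero_index)

lemma pair_mult_2_right: "pair w (2 * v) = 2 * pair w v"
  by (simp add: pair_def sum_distrib_left mult_ac)

lemma bounded_linear_pair: "bounded_linear (pair \<xi>)"
  unfolding pair_def
  by (intro bounded_linear_sum bounded_linear_compose[OF bounded_linear_mult_right bounded_linear_vec_nth])

definition k_linear :: "('k::field ^ 'n \<Rightarrow> 'k ^ 'm) \<Rightarrow> bool" where
  "k_linear f \<longleftrightarrow> (\<forall>a u v. f (a *s u + v) = a *s f u + f v)"

context
  fixes f :: "'k::field ^ 'n \<Rightarrow> 'k ^ 'm"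
  assumes f: "k_linear f"
begin

lemma k_linear_zero: "f 0 = 0"
  using f[unfolded k_linear_def, rule_format, of 1 0 0] by simp

lemma k_linear_add: "f (u + v) = f u + f v"
  using f[unfolded k_linear_def, rule_format, of 1 u v] by simp

lemma k_linear_scale: "f (a *s u) = a *s f u"
  using f[unfolded k_linear_def, rule_format, of a u 0] by (simp add: k_linear_zero)

lemma k_linear_neg: "f (- u) = - f u"
  using k_linear_scale[of "- 1" u] by (simp add: vector_smult_lneg)

lemma k_linear_diff: "f (u - v) = f u - f v"
  using k_linear_add[of u "- v"] by (simp add: k_linear_neg)

lemma k_linear_sum: "f (\<Sum>i\<in>S. g i) = (\<Sum>i\<in>S. f (g i))"
  by (induction S rule: infinite_finite_induct) (simp_all add: k_linear_zero k_linear_add)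

lemma k_linear_expansion: "f v = (\<Sum>i\<in>UNIV. v $ i *s f (axis i 1))"
proof -
  have "f v = f (\<Sum>i\<in>UNIV. v $ i *s axis i 1)"
    by (simp add: basis_expansion)
  then show ?thesis
    by (simp add: k_linear_sum k_linear_scale)
qed

end

lemma norm_vector_smult: "norm (a *s (v::'k::real_normed_field ^ 'n)) = norm a * norm v"
  unfolding norm_vec_def by (simp add: norm_mult L2_set_right_distrib)

lemma norm_vec_nth_le: "norm ((v::'k::real_normed_field ^ 'n) $ i) \<le> norm v"
  unfolding norm_vec_def by (rule member_le_L2_set) simp_all

lemma k_linear_bounded:
  fixes f :: "'k::real_normed_field ^ 'n \<Rightarrow> 'k ^ 'm"
  assumes "k_linear f"
  obtains K where "K \<ge> 0" "\<And>v. norm (f v) \<le> K * norm v"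
proof
  let ?K = "\<Sum>i\<in>UNIV. norm (f (axis i 1))"
  show "?K \<ge> 0"
    by (simp add: sum_nonneg)
  fix v
  have "norm (f v) \<le> (\<Sum>i\<in>UNIV. norm (v $ i *s f (axis i 1)))"
    unfolding k_linear_expansion[OF assms, of v] by (rule norm_sum)
  also have "\<dots> \<le> (\<Sum>i\<in>UNIV. norm v * norm (f (axis i 1)))"
    unfolding norm_vector_smult by (intro sum_mono mult_right_mono) (simp_all add: norm_vec_nth_le)
  finally show "norm (f v) \<le> ?K * norm v"
    by (simp add: sum_distrib_left mult.commute)
qed

lemma scaleR_eq_of_real_smult: "r *\<^sub>R (v::'k::real_normed_field ^ 'n) = of_real r *s v"
  unfolding vec_eq_iff by (simp add: scaleR_conv_of_real[where 'a='k])

lemma norm_funpow_le: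
  fixes f :: "'a::real_normed_vector \<Rightarrow> 'a"
  assumes "\<And>v. norm (f v) \<le> K * norm v" "K \<ge> 0"
  shows "norm ((f ^^ m) v) \<le> K ^ m * norm v"
proof (induction m)
  case (Suc m)
  have "norm ((f ^^ Suc m) v) \<le> K * norm ((f ^^ m) v)"
    using assms(1) by simp
  also have "\<dots> \<le> K * (K ^ m * norm v)"
    using Suc assms(2) by (rule mult_left_mono)
  finally show ?case
    by (simp add: mult.assoc)
qed simp

lemma bounded_linear_smult_left: "bounded_linear (\<lambda>a::'k::real_normed_field. a *s v)"
proof (rule bounded_linear_intro[where K="norm v"])
  show "(a + b) *s v = a *s v + b *s v" for a b :: 'k
    by (simp add: vec_eq_iff distrib_right)
  show "(r *\<^sub>R a) *s v = r *\<^sub>R (a *s v)" for r and a :: 'k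
    by (simp add: vec_eq_iff)
  show "norm (a *s v) \<le> norm a * norm v" for a :: 'k
    by (simp add: norm_vector_smult)
qed

lemma bounded_linear_vector_smult: "bounded_linear (\<lambda>v::'k::real_normed_field ^ 'n. a *s v)"
proof (rule bounded_linear_intro[where K="norm a"])
  show "a *s (u + v) = a *s u + a *s v" for u v :: "'k ^ 'n"
    by (simp add: vec_eq_iff distrib_left)
  show "a *s (r *\<^sub>R v) = r *\<^sub>R (a *s v)" for r and v :: "'k ^ 'n"
    by (simp add: vec_eq_iff)
  show "norm (a *s v) \<le> norm v * norm a" for v :: "'k ^ 'n"
    by (simp add: norm_vector_smult mult.commute)
qed

lemma has_derivative_vec_componentwise:
  fixes f :: "'a::real_normed_vector \<Rightarrow> 'k::real_normed_field ^ 'n"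
  assumes "\<And>i. ((\<lambda>z. f z $ i) has_derivative (\<lambda>h. f' h $ i)) F"
  shows "(f has_derivative f') F"
proof -
  have "((\<lambda>z. \<Sum>i\<in>UNIV. f z $ i *s axis i 1) has_derivative (\<lambda>h. \<Sum>i\<in>UNIV. f' h $ i *s axis i 1)) F"
    by (intro has_derivative_sum bounded_linear.has_derivative[OF bounded_linear_smult_left] assms)
  then show ?thesis
    by (simp add: basis_expansion)
qed

lemma bounded_linear_psi: "bounded_linear (psi a :: ('k::real_normed_field ^ 'n) \<times> ('k ^ 'n) \<Rightarrow> 'k ^ 'n)"
  unfolding psi_def[abs_def]
  by (intro bounded_linear_sub bounded_linear_compose[OF bounded_linear_vector_smult bounded_linear_fst]
      bounded_linear_snd)

lemma kdifferentiable_has_frechet_derivative: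
  assumes "kdifferentiable f x"
  shows "(f has_derivative frechet_derivative f (at x)) (at x)"
    and "frechet_derivative f (at x) (a *s v) = a * frechet_derivative f (at x) v"
proof -
  obtain D where D: "(f has_derivative D) (at x)" and "\<forall>a v. D (a *s v) = a * D v"
    using assms unfolding kdifferentiable_def by blast
  moreover have "frechet_derivative f (at x) = D"
    using frechet_derivative_at[OF D] by simp
  ultimately show "(f has_derivative frechet_derivative f (at x)) (at x)"
    and "frechet_derivative f (at x) (a *s v) = a * frechet_derivative f (at x) v"
    by simp_all
qed

lemma frechet_derivative_eq_pair_d1:
  assumes "kdifferentiable f x"
  shows "frechet_derivative f (at x) v = pair v (d1 f x)"
proof -
  note D = kdifferentiable_has_frechet_derivative[OF assms]
  have "frechet_derivative f (at x) v = frechet_derivative f (at x) (\<Sum>i\<in>UNIV. v $ i *s axis i 1)"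
    by (simp add: basis_expansion)
  also have "\<dots> = (\<Sum>i\<in>UNIV. v $ i * frechet_derivative f (at x) (axis i 1))"
    by (simp add: linear_sum[OF has_derivative_linear[OF D(1)]] D(2))
  finally show ?thesis
    by (simp add: pair_def d1_def)
qed

lemma d2_comp_psi:
  fixes F :: "'k::real_normed_field ^ 'n \<Rightarrow> 'k"
  assumes "kdifferentiable F (psi a p)"
  shows "d2 (F \<circ> psi a) p = (a *s d1 F (psi a p), d1 F (psi a p))"
proof -
  let ?D = "frechet_derivative F (at (psi a p))"
  have D: "(F has_derivative ?D) (at (psi a p))"
    and D_scale: "\<And>b v. ?D (b *s v) = b * ?D v"
    using kdifferentiable_has_frechet_derivative[OF assms] by simp_all
  have "((F \<circ> psi a) has_derivative (?D \<circ> psi a)) (at p)"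
    by (rule diff_chain_at[OF bounded_linear_imp_has_derivative[OF bounded_linear_psi] D])
  then have D_comp: "frechet_derivative (F \<circ> psi a) (at p) = ?D \<circ> psi a"
    by (rule frechet_derivative_at[symmetric])
  have D_neg: "?D (- v) = - ?D v" for v
    using D_scale[of "- 1" v] by (simp add: vector_smult_lneg)
  have psi_units: "psi a (u, 0) = a *s u" "psi a (0, u) = - u" for u
    by (simp_all add: psi_def)
  show ?thesis
    by (simp add: d1_def d2_def D_comp psi_units D_neg D_scale vec_eq_iff)
qed

lemma differentiable_comp_psi:
  assumes "kdifferentiable F (psi a p)"
  shows "(F \<circ> psi a) differentiable (at p)"
  using diff_chain_at[OF bounded_linear_imp_has_derivative[OF bounded_linear_psi]
      kdifferentiable_has_frechet_derivative(1)[OF assms]]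
  unfolding differentiable_def by blast

lemma d2_linear_combination:
  assumes "finite I" and "\<And>m. m \<in> I \<Longrightarrow> G m differentiable (at p)"
  shows "d2 (\<lambda>q. \<Sum>m\<in>I. w m * G m q) p = (\<Sum>m\<in>I. sc2 (w m) (d2 (G m) p))"
proof -
  have "((\<lambda>q. \<Sum>m\<in>I. w m * G m q) has_derivative
      (\<lambda>h. \<Sum>m\<in>I. w m * frechet_derivative (G m) (at p) h)) (at p)"
    using assms(2) by (intro has_derivative_sum has_derivative_mult_right) (simp add: frechet_derivative_works)
  then have "frechet_derivative (\<lambda>q. \<Sum>m\<in>I. w m * G m q) (at p) =
      (\<lambda>h. \<Sum>m\<in>I. w m * frechet_derivative (G m) (at p) h)"
    by (rule frechet_derivative_at[symmetric])
  then show ?thesis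
    by (simp add: d2_def sc2_def prod_eq_iff vec_eq_iff fst_sum snd_sum sum_negf)
qed

lemma continuous_on_eq_off_point:
  fixes h :: "'a::{real_normed_field} \<Rightarrow> 'b::t2_space"
  assumes "continuous_on UNIV h" and "\<And>t. t \<noteq> x \<Longrightarrow> h t = c"
  shows "h x = c"
proof -
  have "(h \<longlongrightarrow> h x) (at x)"
    using assms(1) by (simp add: continuous_on_eq_continuous_at isCont_def)
  moreover have "(h \<longlongrightarrow> c) (at x)"
    by (rule tendsto_eventually) (auto simp: eventually_at_filter assms(2))
  ultimately show ?thesis
    by (rule tendsto_unique[OF at_neq_bot])
qed

definition C1 :: "('k::real_normed_field ^ 'n \<Rightarrow> 'k) \<Rightarrow> bool" where
  "C1 f \<longleftrightarrow> (\<forall>x. kdifferentiable f x) \<and> (\<forall>i. continuous_on UNIV (partial f i))"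

lemma C1_kdifferentiable: "C1 f \<Longrightarrow> kdifferentiable f x"
  by (simp add: C1_def)

lemma C1_continuous_on: "C1 f \<Longrightarrow> continuous_on UNIV f"
  unfolding C1_def kdifferentiable_def
  by (meson continuous_at_imp_continuous_on has_derivative_continuous)

lemma C1_continuous_on_d1: "C1 f \<Longrightarrow> continuous_on UNIV (d1 f)"
proof -
  assume "C1 f"
  moreover have "d1 f = (\<lambda>x. \<chi> i. partial f i x)"
    by (simp add: fun_eq_iff d1_def partial_def)
  ultimately show ?thesis
    by (simp add: C1_def continuous_on_vec_lambda)
qed

lemma smooth_C1: "smooth f \<Longrightarrow> C1 f"
  unfolding smooth_def C1_def by (metis Ck.simps)

lemma C1I:
  assumes "\<And>x. (f has_derivative D x) (at x)"
    and "\<And>x a v. D x (a *s v) = a * D x v"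
    and "\<And>i. continuous_on UNIV (\<lambda>x. D x (axis i 1))"
  shows "C1 f"
proof -
  have D_eq: "frechet_derivative f (at x) = D x" for x
    using frechet_derivative_at[OF assms(1)] by simp
  show ?thesis
    unfolding C1_def kdifferentiable_def partial_def D_eq using assms by blast
qed

lemma C1_const: "C1 (\<lambda>_. a)"
  by (rule C1I[where D="\<lambda>_ _. 0"]) simp_all

lemma C1_coord: "C1 (\<lambda>\<xi>. \<xi> $ i)"
  by (rule C1I[where D="\<lambda>_ h. h $ i"])
    (simp_all add: bounded_linear_imp_has_derivative[OF bounded_linear_vec_nth])

lemma C1_add:
  assumes f: "C1 f" and g: "C1 g"
  shows "C1 (\<lambda>x. f x + g x)"
proof (rule C1I)
  note Df = kdifferentiable_has_frechet_derivative[OF C1_kdifferentiable[OF f]]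
  note Dg = kdifferentiable_has_frechet_derivative[OF C1_kdifferentiable[OF g]]
  show "((\<lambda>x. f x + g x) has_derivative (\<lambda>h. frechet_derivative f (at x) h + frechet_derivative g (at x) h)) (at x)" for x
    by (intro has_derivative_add Df Dg)
  show "frechet_derivative f (at x) (a *s v) + frechet_derivative g (at x) (a *s v) =
      a * (frechet_derivative f (at x) v + frechet_derivative g (at x) v)" for x a v
    by (simp add: Df(2) Dg(2) distrib_left)
  show "continuous_on UNIV (\<lambda>x. frechet_derivative f (at x) (axis i 1) + frechet_derivative g (at x) (axis i 1))" for i
    using f g unfolding C1_def partial_def by (intro continuous_on_add) auto
qed

lemma C1_mult:
  assumes f: "C1 f" and g: "C1 g"
  shows "C1 (\<lambda>x. f x * g x)"
proof (rule C1I)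
  note Df = kdifferentiable_has_frechet_derivative[OF C1_kdifferentiable[OF f]]
  note Dg = kdifferentiable_has_frechet_derivative[OF C1_kdifferentiable[OF g]]
  show "((\<lambda>x. f x * g x) has_derivative
      (\<lambda>h. f x * frechet_derivative g (at x) h + frechet_derivative f (at x) h * g x)) (at x)" for x
    by (intro has_derivative_mult Df Dg)
  show "f x * frechet_derivative g (at x) (a *s v) + frechet_derivative f (at x) (a *s v) * g x =
      a * (f x * frechet_derivative g (at x) v + frechet_derivative f (at x) v * g x)" for x a v
    by (simp add: Df(2) Dg(2) algebra_simps)
  show "continuous_on UNIV (\<lambda>x. f x * frechet_derivative g (at x) (axis i 1) +
      frechet_derivative f (at x) (axis i 1) * g x)" for i
    using f g C1_continuous_on[OF f] C1_continuous_on[OF g] unfolding C1_def partial_def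
    by (intro continuous_on_add continuous_on_mult) auto
qed

lemma poly_le_C1: "poly_le d f \<Longrightarrow> C1 f"
  by (induction rule: poly_le.induct) (auto intro: C1_const C1_coord C1_add C1_mult)

locale lie_algebra =
  fixes B :: "'k::{real_normed_field,banach} ^ 'n \<Rightarrow> 'k ^ 'n \<Rightarrow> 'k ^ 'n"
  assumes lie: "is_lie_bracket (*s) B"
begin

lemma k_linear_bracket_left: "k_linear (\<lambda>u. B u w)"
  using lie by (simp add: is_lie_bracket_def k_linear_def)

lemma k_linear_bracket_right: "k_linear (B w)"
  using lie by (simp add: is_lie_bracket_def k_linear_def)

lemma bracket_self: "B u u = 0"
  using lie by (simp add: is_lie_bracket_def)

lemma bracket_zero_left [simp]: "B 0 w = 0"
  using k_linear_zero[OF k_linear_bracket_left] by simp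

lemma bracket_zero_right [simp]: "B w 0 = 0"
  using k_linear_zero[OF k_linear_bracket_right] by simp

lemmas bracket_simps =
  k_linear_add[OF k_linear_bracket_left] k_linear_add[OF k_linear_bracket_right]
  k_linear_diff[OF k_linear_bracket_left] k_linear_diff[OF k_linear_bracket_right]
  k_linear_neg[OF k_linear_bracket_left] k_linear_neg[OF k_linear_bracket_right]
  k_linear_scale[OF k_linear_bracket_left] k_linear_scale[OF k_linear_bracket_right]

lemma bracket_antisym: "B u v = - B v u"
proof -
  have "B (u + v) (u + v) = B u v + B v u"
    unfolding bracket_simps by (simp add: bracket_self)
  then show ?thesis
    by (simp add: bracket_self eq_neg_iff_add_eq_0)
qed

subsection \<open>The coadjoint action of exp x\<close>

lemma summable_expad: "summable (\<lambda>m. inverse (fact m) *\<^sub>R ((B x ^^ m) v))"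
proof -
  obtain K where K: "K \<ge> 0" "\<And>v. norm (B x v) \<le> K * norm v"
    using k_linear_bounded[OF k_linear_bracket_right] by blast
  show ?thesis
  proof (rule summable_comparison_test'[OF summable_mult2[OF summable_exp[of K]]])
    fix m
    have "norm (inverse (fact m) *\<^sub>R ((B x ^^ m) v)) \<le> inverse (fact m) * (K ^ m * norm v)"
      using norm_funpow_le[OF K(2,1)] by (simp add: mult_left_mono)
    then show "norm (inverse (fact m) *\<^sub>R ((B x ^^ m) v)) \<le> inverse (fact m) * K ^ m * norm v"
      by (simp add: mult.assoc)
  qed
qed

lemma funpow_bracket_scale: "(B (z *s x) ^^ m) v = z ^ m *s (B x ^^ m) v"
  by (induction m) (simp_all add: bracket_simps vector_smult_assoc mult.commute)

definition coAd_coeff :: "'k ^ 'n \<Rightarrow> 'k ^ 'n \<Rightarrow> 'n \<Rightarrow> nat \<Rightarrow> 'k" where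
  "coAd_coeff x \<xi> i m = of_real (inverse (fact m)) * pair \<xi> ((B x ^^ m) (axis i 1))"

lemma pair_expad_term:
  "(\<lambda>m. pair \<xi> (inverse (fact m) *\<^sub>R ((B x ^^ m) (axis i 1)))) = coAd_coeff x \<xi> i"
  by (simp add: fun_eq_iff scaleR_eq_of_real_smult pair_scale_right coAd_coeff_def)

lemma summable_coAd_coeff: "summable (coAd_coeff x \<xi> i)"
proof -
  have "summable (\<lambda>m. pair \<xi> (inverse (fact m) *\<^sub>R ((B x ^^ m) (axis i 1))))"
    by (rule bounded_linear.summable[OF bounded_linear_pair summable_expad])
  then show ?thesis
    unfolding pair_expad_term .
qed

lemma coAd_power_series: "coAd B (z *s x) \<xi> $ i = (\<Sum>m. coAd_coeff x \<xi> i m * z ^ m)"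
proof -
  have "coAd B (z *s x) \<xi> $ i = (\<Sum>m. pair \<xi> (inverse (fact m) *\<^sub>R ((B (z *s x) ^^ m) (axis i 1))))"
    unfolding coAd_def expad_def vec_lambda_beta
    by (rule bounded_linear.suminf[OF bounded_linear_pair summable_expad])
  also have "\<dots> = (\<Sum>m. coAd_coeff x \<xi> i m * z ^ m)"
    by (simp add: funpow_bracket_scale scaleR_eq_of_real_smult pair_scale_right coAd_coeff_def mult_ac)
  finally show ?thesis .
qed

lemma coAd_zero: "coAd B 0 \<xi> = \<xi>"
  using coAd_power_series[of 0 _ \<xi>]
  by (simp add: vec_eq_iff powser_zero coAd_coeff_def pair_axis_right)

lemma coAd_curve_has_derivative:
  "((\<lambda>z. coAd B (z *s x) \<xi>) has_derivative (\<lambda>h. h *s (\<chi> i. pair \<xi> (B x (axis i 1))))) (at 0)"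
proof (rule has_derivative_vec_componentwise)
  fix i
  have "DERIV (\<lambda>z. \<Sum>m. coAd_coeff x \<xi> i m * z ^ m) 0 :> (\<Sum>m. diffs (coAd_coeff x \<xi> i) m * 0 ^ m)"
    by (rule termdiffs_strong[where K=1]) (simp_all add: summable_coAd_coeff)
  then have "DERIV (\<lambda>z. coAd B (z *s x) \<xi> $ i) 0 :> pair \<xi> (B x (axis i 1))"
    by (simp add: coAd_power_series diffs_def coAd_coeff_def)
  then show "((\<lambda>z. coAd B (z *s x) \<xi> $ i) has_derivative (\<lambda>h. (h *s (\<chi> i. pair \<xi> (B x (axis i 1)))) $ i)) (at 0)"
    by (simp add: has_field_derivative_def mult_commute_abs)
qed

lemma pair_coadjoint: "pair (\<chi> i. pair \<xi> (B x (axis i 1))) v = pair \<xi> (B x v)"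
proof -
  have "pair \<xi> (B x v) = (\<Sum>i\<in>UNIV. v $ i * pair \<xi> (B x (axis i 1)))"
    by (subst k_linear_expansion[OF k_linear_bracket_right]) (simp add: pair_sum_right pair_scale_right)
  then show ?thesis
    by (simp add: pair_def mult.commute)
qed

lemma Ad_star_invariant_infinitesimal:
  assumes "kdifferentiable F \<xi>" and "Ad_star_invariant B F"
  shows "pair \<xi> (B x (d1 F \<xi>)) = 0"
proof -
  let ?D = "frechet_derivative F (at \<xi>)"
  let ?w = "\<chi> i. pair \<xi> (B x (axis i 1))"
  have "(F has_derivative ?D) (at (coAd B (0 *s x) \<xi>))"
    using kdifferentiable_has_frechet_derivative(1)[OF assms(1)] by (simp add: coAd_zero)
  from diff_chain_at[OF coAd_curve_has_derivative this]
  have "((\<lambda>z. F (coAd B (z *s x) \<xi>)) has_derivative (\<lambda>h. ?D (h *s ?w))) (at 0)"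
    by (simp add: o_def)
  moreover have "((\<lambda>z. F (coAd B (z *s x) \<xi>)) has_derivative (\<lambda>h. 0)) (at 0)"
    using assms(2) by (simp add: Ad_star_invariant_def)
  ultimately have "(\<lambda>h. ?D (h *s ?w)) = (\<lambda>h. 0)"
    by (rule has_derivative_unique)
  from fun_cong[OF this, of 1] have "?D ?w = 0"
    by simp
  then show ?thesis
    by (simp add: frechet_derivative_eq_pair_d1[OF assms(1)] pair_coadjoint)
qed

lemma Ad_star_invariant_infinitesimal_left:
  assumes "kdifferentiable F \<xi>" and "Ad_star_invariant B F"
  shows "pair \<xi> (B (d1 F \<xi>) x) = 0"
  using Ad_star_invariant_infinitesimal[OF assms, of x] bracket_antisym[of "d1 F \<xi>" x]
  by (simp add: pair_neg_right)

lemma continuous_on_pair_bracket: "continuous_on UNIV (\<lambda>v. pair \<zeta> (B a v))"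
proof -
  have eq: "(\<lambda>v. pair \<zeta> (B a v)) = pair (\<chi> i. pair \<zeta> (B a (axis i 1)))"
    by (simp add: fun_eq_iff pair_coadjoint)
  show ?thesis
    unfolding eq by (rule linear_continuous_on[OF bounded_linear_pair])
qed

text \<open>Subtracting the infinitesimal invariance of \<open>F\<close> at \<open>\<mu>\<close> from that of \<open>H\<close> at \<open>\<mu> + t \<zeta>\<close>
  kills \<open>t \<langle>\<zeta>, [d F(\<mu>), d H(\<mu> + t \<zeta>)]\<rangle>\<close>; continuity of \<open>d H\<close> then lets \<open>t \<rightarrow> 0\<close>.\<close>

lemma invariant_differentials_commute:
  assumes F: "kdifferentiable F \<mu>" "Ad_star_invariant B F"
    and H: "C1 H" "Ad_star_invariant B H"
  shows "B (d1 F \<mu>) (d1 H \<mu>) = 0"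
proof (rule vec_eq_0_if_pair_eq_0)
  fix \<zeta>
  define h where "h t = pair \<zeta> (B (d1 F \<mu>) (d1 H (\<mu> + t *s \<zeta>)))" for t
  have "continuous_on UNIV h"
    unfolding h_def
    by (intro continuous_on_compose2[OF continuous_on_pair_bracket]
        continuous_on_compose2[OF C1_continuous_on_d1[OF H(1)]] continuous_on_add continuous_on_const
        linear_continuous_on[OF bounded_linear_smult_left]) auto
  moreover have "h t = 0" if "t \<noteq> 0" for t
proof -
    let ?\<nu> = "\<mu> + t *s \<zeta>"
    have "pair \<mu> (B (d1 F \<mu>) (d1 H ?\<nu>)) = 0"
      by (rule Ad_star_invariant_infinitesimal_left[OF F])
    moreover have "pair ?\<nu> (B (d1 F \<mu>) (d1 H ?\<nu>)) = 0"
      by (rule Ad_star_invariant_infinitesimal[OF C1_kdifferentiable[OF H(1)] H(2)])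
    ultimately have "t * h t = 0"
      by (simp add: h_def pair_simps)
    with that show ?thesis
      by simp
  qed
  ultimately have "h 0 = 0"
    by (rule continuous_on_eq_off_point)
  then show "pair \<zeta> (B (d1 F \<mu>) (d1 H \<mu>)) = 0"
    by (simp add: h_def)
qed

definition R_form :: "(('k ^ 'n) \<times> ('k ^ 'n) \<Rightarrow> ('k ^ 'n) \<times> ('k ^ 'n)) \<Rightarrow>
    ('k ^ 'n) \<times> ('k ^ 'n) \<Rightarrow> ('k ^ 'n) \<times> ('k ^ 'n) \<Rightarrow> ('k ^ 'n) \<times> ('k ^ 'n) \<Rightarrow> 'k" where
  "R_form S p u v = inverse 2 * pair2 p (prod_br B (S u) v + prod_br B u (S v))"

lemma R_bracket_eq_R_form: "R_bracket B S F H p = R_form S p (d2 F p) (d2 H p)"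
  by (simp add: R_bracket_def R_form_def)

context
  fixes S :: "('k ^ 'n) \<times> ('k ^ 'n) \<Rightarrow> ('k ^ 'n) \<times> ('k ^ 'n)"
  assumes S: "\<And>a u u'. S (sc2 a u + u') = sc2 a (S u) + S u'"
begin

lemma R_form_linear_left: "R_form S p (sc2 a u + u') v = a * R_form S p u v + R_form S p u' v"
  unfolding R_form_def S by (simp add: pair2_def prod_br_def sc2_def bracket_simps pair_simps algebra_simps)

lemma R_form_linear_right: "R_form S p v (sc2 a u + u') = a * R_form S p v u + R_form S p v u'"
  unfolding R_form_def S by (simp add: pair2_def prod_br_def sc2_def bracket_simps pair_simps algebra_simps)

lemma R_form_zero_left: "R_form S p 0 v = 0"
  using R_form_linear_left[of p 1 0 0 v] by (simp add: sc2_def zero_prod_def)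

lemma R_form_zero_right: "R_form S p v 0 = 0"
  using R_form_linear_right[of p v 1 0 0] by (simp add: sc2_def zero_prod_def)

lemma R_form_sum_left:
  "R_form S p (\<Sum>m\<in>I. sc2 (w m) (u m)) v = (\<Sum>m\<in>I. w m * R_form S p (u m) v)"
  by (induction I rule: infinite_finite_induct) (simp_all add: R_form_zero_left R_form_linear_left)

lemma R_form_sum_right:
  "R_form S p v (\<Sum>m\<in>I. sc2 (w m) (u m)) = (\<Sum>m\<in>I. w m * R_form S p v (u m))"
  by (induction I rule: infinite_finite_induct) (simp_all add: R_form_zero_right R_form_linear_right)

lemma R_bracket_linear_combinations_eq_0:
  assumes "finite I" "finite J"
    and "\<And>m. m \<in> I \<Longrightarrow> G m differentiable (at p)" "\<And>n. n \<in> J \<Longrightarrow> K n differentiable (at p)"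
    and "\<And>m n. m \<in> I \<Longrightarrow> n \<in> J \<Longrightarrow> R_bracket B S (G m) (K n) p = 0"
  shows "R_bracket B S (\<lambda>q. \<Sum>m\<in>I. v m * G m q) (\<lambda>q. \<Sum>n\<in>J. w n * K n q) p = 0"
  using assms(5) unfolding R_bracket_eq_R_form
  by (simp add: d2_linear_combination assms(1-4) R_form_sum_left R_form_sum_right)

end

end

section \<open>The R-bracket of functions pulled back along \<open>\<psi>\<^sub>\<lambda>\<close>\<close>

locale lie_algebra_endomorphism =
  lie_algebra B for B :: "'k::{real_normed_field,banach} ^ 'n \<Rightarrow> 'k ^ 'n \<Rightarrow> 'k ^ 'n" +
  fixes R :: "'k ^ 'n \<Rightarrow> 'k ^ 'n"
  assumes k_linear_R: "k_linear R"
begin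

lemma R_zero [simp]: "R 0 = 0"
  by (rule k_linear_zero[OF k_linear_R])

lemma Rcal_linear: "Rcal R c (sc2 a u + u') = sc2 a (Rcal R c u) + Rcal R c u'"
proof -
  have "R (a *s x + x' - (a *s y + y')) = a *s R (x - y) + R (x' - y')" for x x' y y'
    using k_linear_R[unfolded k_linear_def, rule_format, of a "x - y" "x' - y'"]
    by (simp add: algebra_simps vector_ssub_ldistrib)
  then show ?thesis
    by (simp add: Rcal_def sc2_def vector_add_ldistrib vector_smult_assoc mult.commute)
qed

lemma R_bracket_psi_eq_0:
  assumes F: "C1 F" "Ad_star_invariant B F" and H: "C1 H" "Ad_star_invariant B H"
  shows "R_bracket B (Rcal R c) (F \<circ> psi lam) (H \<circ> psi gam) p = 0"
proof -
  obtain \<xi> \<eta> where p: "p = (\<xi>, \<eta>)"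
    by fastforce
  define \<mu> where "\<mu> = lam *s \<xi> - \<eta>"
  define \<nu> where "\<nu> = gam *s \<xi> - \<eta>"
  define a where "a = d1 F \<mu>"
  define b where "b = d1 H \<nu>"
  have dF: "d2 (F \<circ> psi lam) p = (lam *s a, a)"
    using d2_comp_psi[OF C1_kdifferentiable[OF F(1)]] by (simp add: a_def \<mu>_def p psi_def)
  have dH: "d2 (H \<circ> psi gam) p = (gam *s b, b)"
    using d2_comp_psi[OF C1_kdifferentiable[OF H(1)]] by (simp add: b_def \<nu>_def p psi_def)
  have inv_F: "pair \<mu> (B a x) = 0" for x
    unfolding a_def by (rule Ad_star_invariant_infinitesimal_left[OF C1_kdifferentiable[OF F(1)] F(2)])
  have inv_H: "pair \<nu> (B x b) = 0" for x
    unfolding b_def by (rule Ad_star_invariant_infinitesimal[OF C1_kdifferentiable[OF H(1)] H(2)])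
  have pair_\<xi>: "pair \<xi> (B a b) = 0"
  proof (cases "lam = gam")
    case True
    then show ?thesis
      using invariant_differentials_commute[OF C1_kdifferentiable[OF F(1)] F(2) H]
      by (simp add: a_def b_def \<mu>_def \<nu>_def)
  next
    case False
    have "(lam - gam) *s \<xi> = \<mu> - \<nu>"
      by (simp add: \<mu>_def \<nu>_def vec_eq_iff algebra_simps)
    then have "(lam - gam) * pair \<xi> (B a b) = pair \<mu> (B a b) - pair \<nu> (B a b)"
      by (metis pair_diff_left pair_scale_left)
    with False show ?thesis
      by (simp add: inv_F inv_H)
  qed
  have pair_\<eta>: "pair \<eta> (B a b) = 0"
proof -
    have "\<eta> = lam *s \<xi> - \<mu>"
      by (simp add: \<mu>_def)
    then show ?thesis
      by (simp add: pair_diff_left pair_scale_left pair_\<xi> inv_F)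
  qed
  text \<open>Expanding the bracket, every term pairs \<open>\<mu>\<close> with a bracket \<open>[a, _]\<close>, \<open>\<nu>\<close> with a bracket
    \<open>[_, b]\<close>, or \<open>\<xi>\<close> or \<open>\<eta>\<close> with \<open>[a, b]\<close>.\<close>
  have "R_bracket B (Rcal R c) (F \<circ> psi lam) (H \<circ> psi gam) p =
     inverse 2 * (pair \<nu> (B (R (lam *s a - a)) b) + pair \<mu> (B a (R (gam *s b - b)))
        + c * (gam + lam) * (pair \<xi> (B a b) - pair \<eta> (B a b)))"
    unfolding R_bracket_def dF dH
    by (simp add: pair2_def prod_br_def Rcal_def p \<mu>_def \<nu>_def bracket_simps pair_simps algebra_simps)
  then show ?thesis
    by (simp add: inv_F inv_H pair_\<xi> pair_\<eta>)
qed

lemma R_bracket_psi_1_left_eq_0: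
  assumes "\<And>x. kdifferentiable F x" and "Ad_star_invariant B F"
  shows "R_bracket B (Rcal R c) (F \<circ> psi 1) H p = 0"
proof -
  obtain \<xi> \<eta> where p: "p = (\<xi>, \<eta>)"
    by fastforce
  obtain u v where uv: "d2 H p = (u, v)"
    by fastforce
  define \<mu> where "\<mu> = \<xi> - \<eta>"
  define a where "a = d1 F \<mu>"
  have dF: "d2 (F \<circ> psi 1) p = (a, a)"
    using d2_comp_psi[OF assms(1), of 1 p] by (simp add: a_def \<mu>_def p psi_def)
  have inv_F: "pair \<mu> (B a x) = 0" for x
    unfolding a_def by (rule Ad_star_invariant_infinitesimal_left[OF assms])
  have "R_bracket B (Rcal R c) (F \<circ> psi 1) H p =
     inverse 2 * (pair \<mu> (B a (R (u - v))) + c * pair \<mu> (B a u) + c * pair \<mu> (B a v))"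
    unfolding R_bracket_def dF uv
    by (simp add: pair2_def prod_br_def Rcal_def p \<mu>_def bracket_simps pair_simps algebra_simps)
  then show ?thesis
    by (simp add: inv_F)
qed

lemma R_bracket_psi_1_eq_LP_bracket:
  assumes "\<And>x. kdifferentiable F x" and "\<And>x. kdifferentiable H x"
  shows "R_bracket B (Rcal R 1) (F \<circ> psi 1) (H \<circ> psi 1) p = LP_bracket B F H (psi 1 p)"
proof -
  obtain \<xi> \<eta> where p: "p = (\<xi>, \<eta>)"
    by fastforce
  have dF: "d2 (F \<circ> psi 1) p = (d1 F (\<xi> - \<eta>), d1 F (\<xi> - \<eta>))"
    using d2_comp_psi[OF assms(1), of 1 p] by (simp add: p psi_def)
  have dH: "d2 (H \<circ> psi 1) p = (d1 H (\<xi> - \<eta>), d1 H (\<xi> - \<eta>))"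
    using d2_comp_psi[OF assms(2), of 1 p] by (simp add: p psi_def)
  show ?thesis
    unfolding R_bracket_def LP_bracket_def dF dH
    by (simp add: pair2_def prod_br_def Rcal_def p psi_def bracket_simps pair_simps algebra_simps
        pair_mult_2_right)
qed

lemma R_bracket_psi_combinations_eq_0:
  assumes F: "C1 F" "Ad_star_invariant B F" and H: "C1 H" "Ad_star_invariant B H"
    and "finite I" "finite J"
  shows "R_bracket B (Rcal R c) (\<lambda>q. \<Sum>m\<in>I. v m * (F \<circ> psi (s m)) q)
           (\<lambda>q. \<Sum>n\<in>J. w n * (H \<circ> psi (t n)) q) p = 0"
  by (rule R_bracket_linear_combinations_eq_0[OF Rcal_linear assms(5,6)])
    (blast intro: differentiable_comp_psi C1_kdifferentiable F H R_bracket_psi_eq_0)+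

end

section \<open>Coefficients of \<open>\<lambda> \<mapsto> F(\<lambda> \<xi> - \<eta>)\<close>\<close>

lemma lagrange_basis:
  fixes x :: "nat \<Rightarrow> 'a::field"
  assumes "inj_on x {..l}"
  obtains L where "\<And>m. m \<le> l \<Longrightarrow> degree (L m) \<le> l"
    and "\<And>m k. m \<le> l \<Longrightarrow> k \<le> l \<Longrightarrow> poly (L m) (x k) = (if k = m then 1 else 0)"
proof
  let ?L = "\<lambda>m. smult (inverse (\<Prod>k\<in>{..l} - {m}. x m - x k)) (\<Prod>k\<in>{..l} - {m}. [:- x k, 1:])"
  show "degree (?L m) \<le> l" if "m \<le> l" for m
proof -
    have "degree (?L m) \<le> degree (\<Prod>k\<in>{..l} - {m}. [:- x k, 1:])"
      by (rule degree_smult_le)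
    also have "\<dots> \<le> sum (degree \<circ> (\<lambda>k. [:- x k, 1:])) ({..l} - {m})"
      by (rule degree_prod_sum_le) simp
    also have "\<dots> \<le> l"
      using that by simp
    finally show ?thesis .
  qed
  show "poly (?L m) (x k) = (if k = m then 1 else 0)" if "m \<le> l" "k \<le> l" for m k
  proof (cases "k = m")
    case True
    have "(\<Prod>k\<in>{..l} - {m}. x m - x k) \<noteq> 0"
      using assms that by (auto simp: inj_on_def)
    with True show ?thesis
      by (simp add: poly_prod)
  next
    case False
    with that have "k \<in> {..l} - {m}"
      by simp
    then have "(\<Prod>k'\<in>{..l} - {m}. poly [:- x k', 1:] (x k)) = 0"
      by (intro prod_zero) auto
    with False show ?thesis
      by (simp add: poly_prod)
  qed
qed

lemma vandermonde_left_inverse: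
  obtains W :: "nat \<Rightarrow> nat \<Rightarrow> 'a::field_char_0"
  where "\<And>a i. i \<le> l \<Longrightarrow> a i = (\<Sum>m\<le>l. W i m * (\<Sum>j\<le>l. of_nat m ^ j * a j))"
proof -
  have "inj_on (of_nat :: nat \<Rightarrow> 'a) {..l}"
    by (simp add: inj_on_def)
  then obtain L where deg_L: "\<And>m. m \<le> l \<Longrightarrow> degree (L m) \<le> l"
    and poly_L: "\<And>m k. m \<le> l \<Longrightarrow> k \<le> l \<Longrightarrow> poly (L m) (of_nat k) = (if k = m then 1 else (0::'a))"
    using lagrange_basis by blast
  show ?thesis
  proof (rule that[of "\<lambda>i m. coeff (L m) i"])
    fix a :: "nat \<Rightarrow> 'a" and i
    assume "i \<le> l"
    define q where "q = (\<Sum>j\<le>l. monom (a j) j)"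
    define Q where "Q = (\<Sum>m\<le>l. smult (poly q (of_nat m)) (L m))"
    have q_eq_Q: "q = Q"
    proof (rule poly_eqI_degree[of "of_nat ` {..l}"])
      show "poly q z = poly Q z" if "z \<in> of_nat ` {..l}" for z
      proof -
        from that obtain k where "k \<le> l" and z: "z = of_nat k"
          by blast
        then have "poly Q z = (\<Sum>m\<le>l. if m = k then poly q z else 0)"
          unfolding Q_def poly_sum poly_smult by (intro sum.cong) (simp_all add: poly_L)
        with \<open>k \<le> l\<close> show ?thesis
          by simp
      qed
      have "card (of_nat ` {..l} :: 'a set) = Suc l"
        by (simp add: card_image inj_on_def)
      moreover have "degree q \<le> l"
        unfolding q_def by (rule degree_sum_le) (auto intro: order.trans[OF degree_monom_le])
      moreover have "degree Q \<le> l"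
        unfolding Q_def by (rule degree_sum_le) (auto intro: order.trans[OF degree_smult_le] deg_L)
      ultimately show "degree q < card (of_nat ` {..l} :: 'a set)" "degree Q < card (of_nat ` {..l} :: 'a set)"
        by simp_all
    qed
    have "a i = coeff q i"
      using \<open>i \<le> l\<close> by (simp add: q_def coeff_sum_monom)
    also have "\<dots> = coeff Q i"
      by (simp add: q_eq_Q)
    also have "\<dots> = (\<Sum>m\<le>l. coeff (L m) i * (\<Sum>j\<le>l. of_nat m ^ j * a j))"
      by (simp add: Q_def coeff_sum q_def poly_sum poly_monom mult.commute)
    finally show "a i = (\<Sum>m\<le>l. coeff (L m) i * (\<Sum>j\<le>l. of_nat m ^ j * a j))" .
  qed
qed

lemma coefficient_eq_psi_combination:
  fixes F :: "'k::real_normed_field ^ 'n \<Rightarrow> 'k"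
  assumes "\<forall>lam \<xi> \<eta>. F (lam *s \<xi> - \<eta>) = (\<Sum>i\<le>l. lam ^ i * Fs i (\<xi>, \<eta>))" and "i \<le> l"
  shows "\<exists>w. Fs i = (\<lambda>q. \<Sum>m\<le>l. w m * (F \<circ> psi (of_nat m)) q)"
proof -
  obtain W :: "nat \<Rightarrow> nat \<Rightarrow> 'k"
    where W: "\<And>a i. i \<le> l \<Longrightarrow> a i = (\<Sum>m\<le>l. W i m * (\<Sum>j\<le>l. of_nat m ^ j * a j))"
    using vandermonde_left_inverse[where l=l and 'a='k] by blast
  have "Fs i q = (\<Sum>m\<le>l. W i m * (F \<circ> psi (of_nat m)) q)" for q
    using W[OF assms(2), of "\<lambda>j. Fs j q"] assms(1)[rule_format, of _ "fst q" "snd q"]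
    by (simp add: psi_def mult.commute)
  then show ?thesis
    by blast
qed

context lie_algebra_endomorphism
begin

lemma R_bracket_coefficients_eq_0:
  assumes F: "C1 F" "Ad_star_invariant B F" and H: "C1 H" "Ad_star_invariant B H"
    and F_expansion: "\<forall>lam \<xi> \<eta>. F (lam *s \<xi> - \<eta>) = (\<Sum>i\<le>l. lam ^ i * Fs i (\<xi>, \<eta>))"
    and H_expansion: "\<forall>gam \<xi> \<eta>. H (gam *s \<xi> - \<eta>) = (\<Sum>j\<le>k. gam ^ j * Hs j (\<xi>, \<eta>))"
    and "A \<in> Fs ` {..l} \<union> Hs ` {..k}" "C \<in> Fs ` {..l} \<union> Hs ` {..k}"
  shows "R_bracket B (Rcal R c) A C p = 0"
proof -
  have combination: "\<exists>\<Phi> w N. C1 \<Phi> \<and> Ad_star_invariant B \<Phi> \<and>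
      X = (\<lambda>q. \<Sum>m\<le>N. w m * (\<Phi> \<circ> psi (of_nat m)) q)"
    if "X \<in> Fs ` {..l} \<union> Hs ` {..k}" for X
  proof -
    from that consider (coefficient_F) i where "i \<le> l" "X = Fs i"
      | (coefficient_H) j where "j \<le> k" "X = Hs j"
      by blast
    then show ?thesis
    proof cases
      case coefficient_F
      then obtain w where "X = (\<lambda>q. \<Sum>m\<le>l. w m * (F \<circ> psi (of_nat m)) q)"
        using coefficient_eq_psi_combination[OF F_expansion] by blast
      with F show ?thesis
        by blast
    next
      case coefficient_H
      then obtain w where "X = (\<lambda>q. \<Sum>m\<le>k. w m * (H \<circ> psi (of_nat m)) q)"
        using coefficient_eq_psi_combination[OF H_expansion] by blast
      with H show ?thesis
        by blast
    qed
  qed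
  obtain \<Phi> v M where "C1 \<Phi>" "Ad_star_invariant B \<Phi>"
    and A: "A = (\<lambda>q. \<Sum>m\<le>M. v m * (\<Phi> \<circ> psi (of_nat m)) q)"
    using combination[OF assms(7)] by blast
  moreover obtain \<Psi> w N where "C1 \<Psi>" "Ad_star_invariant B \<Psi>"
    and C: "C = (\<lambda>q. \<Sum>n\<le>N. w n * (\<Psi> \<circ> psi (of_nat n)) q)"
    using combination[OF assms(8)] by blast
  ultimately show ?thesis
    unfolding A C by (intro R_bracket_psi_combinations_eq_0) simp_all
qed

end

theorem theorem2p3:
  fixes B :: "'k::{real_normed_field,banach} ^ 'n \<Rightarrow> 'k ^ 'n \<Rightarrow> 'k ^ 'n"
    and R :: "'k ^ 'n \<Rightarrow> 'k ^ 'n"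
    and c :: 'k
  assumes lie: "is_lie_bracket (*s) B"
    and R_lin: "\<forall>a u v. R (a *s u + v) = a *s R u + R v"
    and Rmat: "is_R_matrix sc2 (prod_br B) (Rcal R c)"
  shows
    "(\<forall>F. smooth F \<and> Ad_star_invariant B F \<longrightarrow>
          casimir (R_bracket B (Rcal R c)) (F \<circ> psi 1))
   \<and> (\<forall>F H lam gam. smooth F \<and> Ad_star_invariant B F \<and> smooth H \<and> Ad_star_invariant B H \<longrightarrow>
          (\<forall>p. R_bracket B (Rcal R c) (F \<circ> psi lam) (H \<circ> psi gam) p = 0))
   \<and> (\<forall>F H (l::nat) (k::nat) Fs Hs.
          poly_degree F l \<and> poly_degree H k \<and> Ad_star_invariant B F \<and> Ad_star_invariant B H \<and>
          (\<forall>lam \<xi> \<eta>. F (lam *s \<xi> - \<eta>) = (\<Sum>i\<le>l. lam ^ i * Fs i (\<xi>, \<eta>))) \<and>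
          (\<forall>gam \<xi> \<eta>. H (gam *s \<xi> - \<eta>) = (\<Sum>j\<le>k. gam ^ j * Hs j (\<xi>, \<eta>))) \<longrightarrow>
          (\<forall>A\<in>Fs ` {..l} \<union> Hs ` {..k}. \<forall>C\<in>Fs ` {..l} \<union> Hs ` {..k}.
              \<forall>p. R_bracket B (Rcal R c) A C p = 0))
   \<and> (c = 1 \<longrightarrow> (\<forall>F H. smooth F \<and> smooth H \<longrightarrow>
          (\<forall>p. R_bracket B (Rcal R c) (F \<circ> psi 1) (H \<circ> psi 1) p = LP_bracket B F H (psi 1 p))))"
proof -
  interpret lie_algebra_endomorphism B R
    using lie R_lin by unfold_locales (simp_all add: k_linear_def)
  have smooth_kdifferentiable: "kdifferentiable F x" if "smooth F" for F :: "'k ^ 'n \<Rightarrow> 'k" and x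
    using that by (intro C1_kdifferentiable smooth_C1)
  show ?thesis
    unfolding casimir_def poly_degree_def
    by (auto intro: R_bracket_psi_1_left_eq_0 R_bracket_psi_eq_0 R_bracket_coefficients_eq_0
        R_bracket_psi_1_eq_LP_bracket smooth_C1 poly_le_C1 smooth_kdifferentiable)
qed

end
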